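(* Let $\mathcal{B}$ be a binary number format and $\mathbb{F}^E_m$ a floating-point format with $|\mathbb{F}^E_m\cap[0,1]|\le|\overline{\mathbb{R}}_{\mathcal{B}}|+1$, where $\overline{\mathbb{R}}_{\mathcal{B}}$ is the set of values of $\mathcal{B}$. Let $\mathcal{F}$ be the set of CDFs with atoms in $\overline{\mathbb{R}}_{\mathcal{B}}$ and cumulative probabilities in $\mathbb{F}^E_m$, i.e. probability distributions on the finite totally ordered set $\overline{\mathbb{R}}_{\mathcal{B}}$ whose cumulative probabilities $\Pr(\{y:y\le x\})$, $x\in\overline{\mathbb{R}}_{\mathcal{B}}$, all lie in $\mathbb{F}^E_m$. Then $\max_{F'\in\mathcal{F}}H(F')=m+2-2^{-2^{E-1}+3}$, where $H$ denotes Shannon entropy (in bits).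
   Context: $\overline{\mathbb{R}}=\mathbb{R}\cup\{-\infty,+\infty,\bot\}$ with the strict linear order $-\infty<$ reals $<+\infty<\bot$. A binary number format $\mathcal{B}=(n,\gamma_{\mathcal{B}},\phi_{\mathcal{B}})$ consists of $n\ge1$, a map $\gamma_{\mathcal{B}}:\{0,1\}^n\to\overline{\mathbb{R}}$, and a bijection $\phi_{\mathcal{B}}$ of $\{0,1\}^n$ with $b<_{\mathrm{dict}}b'\Rightarrow\gamma_{\mathcal{B}}(\phi_{\mathcal{B}}(b))\le\gamma_{\mathcal{B}}(\phi_{\mathcal{B}}(b'))$; its set of values is $\overline{\mathbb{R}}_{\mathcal{B}}=\gamma_{\mathcal{B}}(\{0,1\}^n)$. $\mathbb{F}^E_m$ is the IEEE-754-style set of floating-point numbers with $E$ exponent bits and $m$ mantissa bits (bias $2^{E-1}-1$, with subnormals), regarded as a set of reals; $\mathbb{F}^E_m\cap[0,1]$ counts zero once. *)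

theory Defs
  imports "HOL-Probability.Probability"
begin

section \<open>Extended reals with an error value: -inf < reals < +inf < bot\<close>

datatype xreal = NInf | Fin real | PInf | Bot

fun xrank :: "xreal \<Rightarrow> nat" where
  "xrank NInf = 0" | "xrank (Fin _) = 1" | "xrank PInf = 2" | "xrank Bot = 3"

instantiation xreal :: linorder
begin
definition less_eq_xreal :: "xreal \<Rightarrow> xreal \<Rightarrow> bool" where
  "less_eq_xreal x y = (case (x, y) of (Fin a, Fin b) \<Rightarrow> a \<le> b | _ \<Rightarrow> xrank x \<le> xrank y)"
definition less_xreal :: "xreal \<Rightarrow> xreal \<Rightarrow> bool" where
  "less_xreal x y = (x \<le> y \<and> \<not> y \<le> x)"
instance
proof
  fix x y z :: xreal
  show "(x < y) = (x \<le> y \<and> \<not> y \<le> x)" by (simp add: less_xreal_def)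
  show "x \<le> x" by (cases x) (auto simp: less_eq_xreal_def)
  show "x \<le> y \<Longrightarrow> y \<le> z \<Longrightarrow> x \<le> z"
    by (cases x; cases y; cases z) (auto simp: less_eq_xreal_def)
  show "x \<le> y \<Longrightarrow> y \<le> x \<Longrightarrow> x = y"
    by (cases x; cases y) (auto simp: less_eq_xreal_def)
  show "x \<le> y \<or> y \<le> x"
    by (cases x; cases y) (auto simp: less_eq_xreal_def)
qed
end

text \<open>Bit strings of length n are bool lists (False = 0, True = 1);
  the dictionary order is the lexicographic order ord_class.lexordp.\<close>

definition bitstrings :: "nat \<Rightarrow> bool list set" where
  "bitstrings n = {b. length b = n}"

definition binary_number_format ::
  "nat \<Rightarrow> (bool list \<Rightarrow> xreal) \<Rightarrow> (bool list \<Rightarrow> bool list) \<Rightarrow> bool" where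
  "binary_number_format n \<gamma> \<phi> \<longleftrightarrow>
     n \<ge> 1 \<and> bij_betw \<phi> (bitstrings n) (bitstrings n) \<and>
     (\<forall>b\<in>bitstrings n. \<forall>b'\<in>bitstrings n. ord_class.lexordp b b' \<longrightarrow> \<gamma> (\<phi> b) \<le> \<gamma> (\<phi> b'))"

definition bnf_values :: "nat \<Rightarrow> (bool list \<Rightarrow> xreal) \<Rightarrow> xreal set" where
  "bnf_values n \<gamma> = \<gamma> ` bitstrings n"

definition fp_bias :: "nat \<Rightarrow> int" where
  "fp_bias E = 2 ^ (E - 1) - 1"

definition fp_set :: "nat \<Rightarrow> nat \<Rightarrow> real set" where
  "fp_set E m =
     {(if s then -1 else 1) * 2 powr (real_of_int (int e - fp_bias E)) * (1 + real f / 2 ^ m)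
        | s e f. 1 \<le> e \<and> e \<le> 2 ^ E - 2 \<and> f < 2 ^ m}
   \<union> {(if s then -1 else 1) * 2 powr (real_of_int (1 - fp_bias E)) * (real f / 2 ^ m)
        | s f. f < (2::nat) ^ m}"

definition cdf_family :: "xreal set \<Rightarrow> real set \<Rightarrow> xreal pmf set" where
  "cdf_family R F = {p. set_pmf p \<subseteq> R \<and>
                        (\<forall>x\<in>R. measure_pmf.prob p {y. y \<le> x} \<in> F)}"

definition shannon_entropy :: "'a pmf \<Rightarrow> real" where
  "shannon_entropy p = - (\<Sum>x\<in>set_pmf p. pmf p x * log 2 (pmf p x))"

end

theory Submission
  imports Defs
begin

(* The floats in [0,1] form a grid 0 = v 0 < v 1 < ... < v K = 1 with
   K = (2^(E-1) - 1) 2^m.  A distribution on a finite chain whose CDF takes values in the grid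
   is the image, under its quantile function, of the grid distribution with masses
   v (k+1) - v k; as merging atoms cannot increase entropy, the grid distribution has
   maximal entropy.  It is attained by spreading these K masses over K distinct atoms,
   which the hypothesis K <= |values of the format| allows.  The subnormal range and each
   binade consist of 2^m equal gaps, doubling from one binade to the next, and summing
   -g log g over them gives m + 2 - 2^(3 - 2^(E-1)). *)

section \<open>Entropy does not increase under merging of atoms\<close>

definition neg_xlogx :: "real \<Rightarrow> real" where
  "neg_xlogx t = - (t * log 2 t)"

lemma neg_xlogx_0 [simp]: "neg_xlogx 0 = 0"
  by (simp add: neg_xlogx_def)

lemma neg_xlogx_add_le:
  assumes "0 \<le> a" "0 \<le> b"
  shows "neg_xlogx (a + b) \<le> neg_xlogx a + neg_xlogx b"
proof (cases "a = 0 \<or> b = 0")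
  case True
  then show ?thesis by auto
next
  case False
  then have "0 < a" "0 < b" using assms by auto
  then have "a * log 2 a + b * log 2 b \<le> a * log 2 (a + b) + b * log 2 (a + b)"
    by (intro add_mono mult_left_mono) auto
  then show ?thesis by (simp add: neg_xlogx_def algebra_simps)
qed

lemma neg_xlogx_sum_le:
  assumes "finite A" "\<And>a. a \<in> A \<Longrightarrow> 0 \<le> h a"
  shows "neg_xlogx (sum h A) \<le> (\<Sum>a\<in>A. neg_xlogx (h a))"
  using assms
proof (induction A rule: finite_induct)
  case (insert x A)
  have "neg_xlogx (sum h (insert x A)) \<le> neg_xlogx (h x) + neg_xlogx (sum h A)"
    using insert by (simp add: neg_xlogx_add_le sum_nonneg)
  also have "\<dots> \<le> neg_xlogx (h x) + (\<Sum>a\<in>A. neg_xlogx (h a))"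
    using insert by simp
  finally show ?case using insert by simp
qed simp

lemma shannon_entropy_neg_xlogx: "shannon_entropy p = (\<Sum>x\<in>set_pmf p. neg_xlogx (pmf p x))"
  by (simp add: shannon_entropy_def neg_xlogx_def sum_negf)

lemma shannon_entropy_map_pmf_inj:
  assumes "inj_on f (set_pmf p)"
  shows "shannon_entropy (map_pmf f p) = shannon_entropy p"
  using assms by (simp add: shannon_entropy_neg_xlogx sum.reindex pmf_map_inj)

lemma shannon_entropy_map_pmf_le:
  assumes "finite (set_pmf p)"
  shows "shannon_entropy (map_pmf f p) \<le> shannon_entropy p"
proof -
  let ?S = "set_pmf p"
  have pmf_map_sum: "pmf (map_pmf f p) y = (\<Sum>x\<in>{x \<in> ?S. f x = y}. pmf p x)" for y
  proof -
    have "pmf (map_pmf f p) y = measure_pmf.prob p (f -` {y} \<inter> ?S)"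
      by (simp add: pmf_map measure_Int_set_pmf)
    also have "f -` {y} \<inter> ?S = {x \<in> ?S. f x = y}"
      by blast
    finally show ?thesis using assms by (simp add: measure_measure_pmf_finite)
  qed
  have "shannon_entropy (map_pmf f p) = (\<Sum>y\<in>f ` ?S. neg_xlogx (\<Sum>x\<in>{x \<in> ?S. f x = y}. pmf p x))"
    by (simp add: shannon_entropy_neg_xlogx pmf_map_sum)
  also have "\<dots> \<le> (\<Sum>y\<in>f ` ?S. \<Sum>x\<in>{x \<in> ?S. f x = y}. neg_xlogx (pmf p x))"
    using assms by (intro sum_mono neg_xlogx_sum_le) auto
  also have "\<dots> = shannon_entropy p"
    using assms by (simp add: shannon_entropy_neg_xlogx sum.image_gen[symmetric])
  finally show ?thesis .
qed

section \<open>Distributions on a finite chain with CDF values in a grid\<close>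

lemma measure_pmf_Int_superset_support:
  assumes "set_pmf p \<subseteq> R"
  shows "measure_pmf.prob p (A \<inter> R) = measure_pmf.prob p A"
proof -
  have "A \<inter> R \<inter> set_pmf p = A \<inter> set_pmf p"
    using assms by blast
  then show ?thesis
    by (metis measure_Int_set_pmf)
qed

lemma measure_pmf_less_eq_cdf_pred:
  fixes p :: "'a::linorder pmf"
  assumes "finite R" "set_pmf p \<subseteq> R" "y \<in> R" "y < x"
  shows "measure_pmf.prob p {z. z < x} = measure_pmf.prob p {z. z \<le> Max {z \<in> R. z < x}}"
proof -
  let ?x' = "Max {z \<in> R. z < x}"
  have "?x' \<in> {z \<in> R. z < x}"
    using assms by (intro Max_in) auto
  moreover have "z \<le> ?x'" if "z \<in> R" "z < x" for z
    using assms that by (intro Max_ge) auto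
  ultimately have "{z. z < x} \<inter> R = {z. z \<le> ?x'} \<inter> R"
    by force
  then show ?thesis
    by (metis assms(2) measure_pmf_Int_superset_support)
qed

lemma pmf_eq_cdf_diff:
  fixes p :: "'a::linorder pmf"
  shows "pmf p x = measure_pmf.prob p {y. y \<le> x} - measure_pmf.prob p {y. y < x}"
proof -
  have "{y. y \<le> x} - {y. y < x} = {x}"
    by auto
  then have "pmf p x = measure_pmf.prob p ({y. y \<le> x} - {y. y < x})"
    by (simp add: measure_pmf_single)
  also have "\<dots> = measure_pmf.prob p {y. y \<le> x} - measure_pmf.prob p {y. y < x}"
    by (rule measure_pmf.finite_measure_Diff) auto
  finally show ?thesis .
qed

lemma pmf_eq_if_cdf_eq:
  fixes p q :: "'a::linorder pmf"
  assumes "finite R" "set_pmf p \<subseteq> R" "set_pmf q \<subseteq> R"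
    and cdf_eq: "\<And>x. x \<in> R \<Longrightarrow> measure_pmf.prob p {y. y \<le> x} = measure_pmf.prob q {y. y \<le> x}"
  shows "p = q"
proof (rule pmf_eqI)
  have strict_cdf_eq: "measure_pmf.prob p {y. y < x} = measure_pmf.prob q {y. y < x}" for x
  proof (cases "\<exists>y\<in>R. y < x")
    case True
    then obtain y where y: "y \<in> R" "y < x"
      by blast
    let ?x' = "Max {z \<in> R. z < x}"
    have "?x' \<in> {z \<in> R. z < x}"
      using assms(1) y by (intro Max_in) auto
    have "measure_pmf.prob p {z. z < x} = measure_pmf.prob p {z. z \<le> ?x'}"
      using assms(1,2) y by (rule measure_pmf_less_eq_cdf_pred)
    also have "\<dots> = measure_pmf.prob q {z. z \<le> ?x'}"
      using \<open>?x' \<in> {z \<in> R. z < x}\<close> by (simp add: cdf_eq)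
    also have "\<dots> = measure_pmf.prob q {z. z < x}"
      using assms(1,3) y by (rule measure_pmf_less_eq_cdf_pred[symmetric])
    finally show ?thesis .
  next
    case False
    then have "{y. y < x} \<inter> R = {}"
      by auto
    then show ?thesis
      by (metis assms(2,3) measure_pmf_Int_superset_support measure_empty)
  qed
  fix x
  show "pmf p x = pmf q x"
  proof (cases "x \<in> R")
    case True
    then show ?thesis
      by (simp only: pmf_eq_cdf_diff[of p] pmf_eq_cdf_diff[of q] cdf_eq strict_cdf_eq)
  next
    case False
    then have "x \<notin> set_pmf p" "x \<notin> set_pmf q"
      using assms(2,3) by auto
    then show ?thesis
      by (simp add: set_pmf_iff)
  qed
qed

definition pmf_quantile :: "'a::linorder set \<Rightarrow> 'a pmf \<Rightarrow> real \<Rightarrow> 'a" where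
  "pmf_quantile R p u = Min {x \<in> R. u \<le> measure_pmf.prob p {y. y \<le> x}}"

lemma pmf_quantile_in:
  fixes p :: "'a::linorder pmf"
  assumes "finite R" "set_pmf p \<subseteq> R" "u \<le> 1"
  shows "pmf_quantile R p u \<in> {x \<in> R. u \<le> measure_pmf.prob p {y. y \<le> x}}"
  unfolding pmf_quantile_def
proof (rule Min_in)
  have "R \<noteq> {}"
    using assms(2) set_pmf_not_empty[of p] by blast
  then have "Max R \<in> R"
    using assms(1) by simp
  moreover have "measure_pmf.prob p {y. y \<le> Max R} = 1"
    using assms(1,2) by (subst measure_pmf.prob_eq_1) (auto simp: AE_measure_pmf_iff)
  ultimately show "{x \<in> R. u \<le> measure_pmf.prob p {y. y \<le> x}} \<noteq> {}"
    using assms(3) by auto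
qed (use assms(1) in simp)

lemma pmf_quantile_le_iff:
  fixes p :: "'a::linorder pmf"
  assumes "finite R" "set_pmf p \<subseteq> R" "u \<le> 1" "x \<in> R"
  shows "pmf_quantile R p u \<le> x \<longleftrightarrow> u \<le> measure_pmf.prob p {y. y \<le> x}"
proof
  assume "pmf_quantile R p u \<le> x"
  then have "measure_pmf.prob p {y. y \<le> pmf_quantile R p u} \<le> measure_pmf.prob p {y. y \<le> x}"
    by (intro measure_pmf.finite_measure_mono) auto
  then show "u \<le> measure_pmf.prob p {y. y \<le> x}"
    using pmf_quantile_in[OF assms(1-3)] by simp
next
  assume "u \<le> measure_pmf.prob p {y. y \<le> x}"
  then show "pmf_quantile R p u \<le> x"
    unfolding pmf_quantile_def using assms(1,4) by (intro Min_le) auto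
qed

lemma finite_linorder_enumeration:
  fixes R :: "'a::linorder set"
  assumes "finite R"
  obtains e where "strict_mono_on {..<card R} e" "e ` {..<card R} = R"
proof -
  define e where "e = (!) (sorted_list_of_set R)"
  have "strict_mono_on {..<card R} e"
  proof (rule strict_mono_onI)
    fix i j
    assume "i \<in> {..<card R}" "j \<in> {..<card R}" "i < j"
    moreover have "sorted_wrt (<) (sorted_list_of_set R)"
      by simp
    ultimately show "e i < e j"
      unfolding e_def by (simp add: sorted_wrt_nth_less)
  qed
  moreover have "e ` {..<card R} = R"
    using assms nth_image[of "card R" "sorted_list_of_set R"] by (simp add: e_def lessThan_atLeast0)
  ultimately show thesis
    by (rule that)
qed

locale cdf_grid =
  fixes v :: "nat \<Rightarrow> real" and K :: nat
  assumes strict_mono_grid: "strict_mono v" and grid_0: "v 0 = 0" and grid_K: "v K = 1"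
begin

lemma grid_le_1: "k \<le> K \<Longrightarrow> v k \<le> 1"
  using strict_mono_less_eq[OF strict_mono_grid] grid_K by metis

definition grid_pmf :: "nat pmf" where
  "grid_pmf = embed_pmf (\<lambda>k. if k < K then v (Suc k) - v k else 0)"

lemma pmf_grid_pmf: "pmf grid_pmf k = (if k < K then v (Suc k) - v k else 0)"
  unfolding grid_pmf_def
proof (rule pmf_embed_pmf)
  have gap_nonneg: "0 \<le> v (Suc k) - v k" for k
    using strict_mono_less_eq[OF strict_mono_grid, of k "Suc k"] by simp
  then show "0 \<le> (if k < K then v (Suc k) - v k else 0)" for k
    by simp
  have "(\<integral>\<^sup>+k. ennreal (if k < K then v (Suc k) - v k else 0) \<partial>count_space UNIV)
      = (\<Sum>k<K. ennreal (v (Suc k) - v k))"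
    by (subst nn_integral_count_space'[where A = "{..<K}"]) auto
  also have "\<dots> = ennreal (v K - v 0)"
    using gap_nonneg by (simp add: sum_lessThan_telescope)
  finally show "(\<integral>\<^sup>+k. ennreal (if k < K then v (Suc k) - v k else 0) \<partial>count_space UNIV) = 1"
    by (simp add: grid_0 grid_K)
qed

lemma set_pmf_grid_pmf: "set_pmf grid_pmf = {..<K}"
proof -
  have "v (Suc k) - v k \<noteq> 0" for k
    using strict_mono_less[OF strict_mono_grid, of k "Suc k"] by simp
  then show ?thesis
    by (auto simp: set_pmf_iff pmf_grid_pmf split: if_splits)
qed

lemma measure_grid_pmf:
  assumes "A \<inter> {..<K} = {..<j} \<inter> {..<K}"
  shows "measure_pmf.prob grid_pmf A = v (min j K)"
proof -
  have "A \<inter> {..<K} = {..<min j K}"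
    using assms by (simp add: greaterThan_Int_greaterThan)
  then have "measure_pmf.prob grid_pmf A = measure_pmf.prob grid_pmf {..<min j K}"
    by (metis measure_pmf_Int_superset_support set_pmf_grid_pmf order_refl)
  also have "\<dots> = sum (pmf grid_pmf) {..<min j K}"
    by (simp add: measure_measure_pmf_finite)
  also have "\<dots> = (\<Sum>k<min j K. v (Suc k) - v k)"
    by (rule sum.cong) (simp_all add: pmf_grid_pmf)
  also have "\<dots> = v (min j K)"
    by (simp add: sum_lessThan_telescope grid_0)
  finally show ?thesis .
qed

lemma shannon_entropy_grid_pmf: "shannon_entropy grid_pmf = (\<Sum>k<K. neg_xlogx (v (Suc k) - v k))"
  by (simp add: shannon_entropy_neg_xlogx set_pmf_grid_pmf pmf_grid_pmf)

lemma map_grid_pmf_quantile: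
  fixes R :: "'a::linorder set" and p :: "'a pmf"
  assumes fin: "finite R" and supp: "set_pmf p \<subseteq> R"
    and cdf: "\<And>x. x \<in> R \<Longrightarrow> measure_pmf.prob p {y. y \<le> x} \<in> v ` {..K}"
  shows "map_pmf (\<lambda>k. pmf_quantile R p (v (Suc k))) grid_pmf = p"
proof (rule pmf_eq_if_cdf_eq[OF fin _ supp])
  let ?q = "\<lambda>k. pmf_quantile R p (v (Suc k))"
  show "set_pmf (map_pmf ?q grid_pmf) \<subseteq> R"
    using pmf_quantile_in[OF fin supp grid_le_1] by (auto simp: set_pmf_grid_pmf)
  fix x
  assume "x \<in> R"
  then obtain c where c: "c \<le> K" "measure_pmf.prob p {y. y \<le> x} = v c"
    using cdf by blast
  have "?q k \<le> x \<longleftrightarrow> k < c" if "k < K" for k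
  proof -
    have "?q k \<le> x \<longleftrightarrow> v (Suc k) \<le> v c"
      using pmf_quantile_le_iff[OF fin supp grid_le_1 \<open>x \<in> R\<close>] that c by simp
    also have "\<dots> \<longleftrightarrow> k < c"
      using strict_mono_less_eq[OF strict_mono_grid, of "Suc k" c] by linarith
    finally show ?thesis .
  qed
  then have "?q -` {y. y \<le> x} \<inter> {..<K} = {..<c} \<inter> {..<K}"
    by auto
  then show "measure_pmf.prob (map_pmf ?q grid_pmf) {y. y \<le> x} = measure_pmf.prob p {y. y \<le> x}"
    using c by (simp add: measure_grid_pmf min_absorb1)
qed

lemma shannon_entropy_le_grid_pmf:
  fixes R :: "'a::linorder set" and p :: "'a pmf"
  assumes "finite R" "set_pmf p \<subseteq> R"
    and "\<And>x. x \<in> R \<Longrightarrow> measure_pmf.prob p {y. y \<le> x} \<in> v ` {..K}"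
  shows "shannon_entropy p \<le> shannon_entropy grid_pmf"
proof -
  have "shannon_entropy p = shannon_entropy (map_pmf (\<lambda>k. pmf_quantile R p (v (Suc k))) grid_pmf)"
    using map_grid_pmf_quantile[OF assms] by simp
  also have "\<dots> \<le> shannon_entropy grid_pmf"
    by (rule shannon_entropy_map_pmf_le) (simp add: set_pmf_grid_pmf)
  finally show ?thesis .
qed

lemma grid_pmf_entropy_attained:
  fixes R :: "'a::linorder set"
  assumes fin: "finite R" and K_le: "K \<le> card R"
  obtains p where "set_pmf p \<subseteq> R"
    and "\<And>x. x \<in> R \<Longrightarrow> measure_pmf.prob p {y. y \<le> x} \<in> v ` {..K}"
    and "shannon_entropy p = shannon_entropy grid_pmf"
proof -
  obtain e where e_mono: "strict_mono_on {..<card R} e" and e_range: "e ` {..<card R} = R"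
    using finite_linorder_enumeration[OF fin] by blast
  have K_sub: "{..<K} \<subseteq> {..<card R}"
    using K_le by auto
  show thesis
  proof (rule that[of "map_pmf e grid_pmf"])
    show "set_pmf (map_pmf e grid_pmf) \<subseteq> R"
      using e_range K_sub by (auto simp: set_pmf_grid_pmf)
    show "shannon_entropy (map_pmf e grid_pmf) = shannon_entropy grid_pmf"
      using strict_mono_on_imp_inj_on[OF e_mono] K_sub
      by (intro shannon_entropy_map_pmf_inj) (auto simp: set_pmf_grid_pmf intro: inj_on_subset)
    fix x
    assume "x \<in> R"
    then obtain j where j: "j < card R" "x = e j"
      using e_range by auto
    have "e -` {y. y \<le> x} \<inter> {..<K} = {..<Suc j} \<inter> {..<K}"
      using strict_mono_on_less_eq[OF e_mono] j K_sub by auto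
    then show "measure_pmf.prob (map_pmf e grid_pmf) {y. y \<le> x} \<in> v ` {..K}"
      by (simp add: measure_grid_pmf)
  qed
qed

end

section \<open>Nonnegative floating-point numbers\<close>

(* fp_units M i is the i-th nonnegative float in multiples of the smallest positive subnormal,
   where M = 2^m: the indices i < M are the subnormals, and i = e * M + f is the normal float
   with biased exponent e and fraction field f. *)
definition fp_units :: "nat \<Rightarrow> nat \<Rightarrow> nat" where
  "fp_units M i = (if i < M then i else 2 ^ (i div M - 1) * (M + i mod M))"

lemma fp_units_subnormal: "i < M \<Longrightarrow> fp_units M i = i"
  by (simp add: fp_units_def)

lemma fp_units_normal:
  assumes "1 \<le> e" "f < M"
  shows "fp_units M (e * M + f) = 2 ^ (e - 1) * (M + f)"
proof -
  have "M \<le> e * M + f"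
    using assms(1) by (metis le_add1 mult_1 mult_le_mono1 order_trans)
  then show ?thesis
    using assms by (simp add: fp_units_def)
qed

lemma fp_units_normal_Suc:
  assumes "1 \<le> e" "f < M"
  shows "fp_units M (Suc (e * M + f)) = 2 ^ (e - 1) * (M + Suc f)"
proof (cases "Suc f < M")
  case True
  then show ?thesis
    using fp_units_normal[OF assms(1) True] by simp
next
  case False
  then have M: "M = Suc f"
    using assms(2) by simp
  then have "Suc (e * M + f) = Suc e * M + 0"
    by simp
  then have "fp_units M (Suc (e * M + f)) = 2 ^ e * M"
    using assms(2) by (simp only: fp_units_normal) simp
  also have "\<dots> = 2 ^ (e - 1) * (M + Suc f)"
    using assms(1) unfolding M by (cases e) (simp_all add: algebra_simps)
  finally show ?thesis .
qed

(* For i < M the exponent i div M - 1 truncates to 0: the subnormals are spaced like the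
   first binade. *)
lemma fp_units_Suc:
  assumes "0 < M"
  shows "fp_units M (Suc i) = fp_units M i + 2 ^ (i div M - 1)"
proof (cases "i < M")
  case True
  then have "Suc i < M \<or> Suc i = 1 * M + 0"
    by auto
  then show ?thesis
    using True assms fp_units_normal[of 1 0 M] by (auto simp: fp_units_subnormal)
next
  case False
  define e f where "e = i div M" and "f = i mod M"
  have i: "i = e * M + f" and "f < M"
    using assms by (simp_all add: e_def f_def)
  have "1 \<le> e"
    using div_le_mono[of M i M] assms False by (simp add: e_def)
  have "fp_units M i = 2 ^ (e - 1) * (M + f)"
    unfolding i using \<open>1 \<le> e\<close> \<open>f < M\<close> by (rule fp_units_normal)
  moreover have "fp_units M (Suc i) = 2 ^ (e - 1) * (M + Suc f)"
    unfolding i using \<open>1 \<le> e\<close> \<open>f < M\<close> by (rule fp_units_normal_Suc)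
  ultimately show ?thesis
    by (simp add: e_def[symmetric])
qed

lemma strict_mono_fp_units: "0 < M \<Longrightarrow> strict_mono (fp_units M)"
  by (simp add: strict_mono_Suc_iff fp_units_Suc)

(* The smallest positive subnormal is 2^(1 - bias - m), and bias - 1 = 2^(E-1) - 2. *)
definition fp_grid :: "nat \<Rightarrow> nat \<Rightarrow> nat \<Rightarrow> real" where
  "fp_grid E m i = real (fp_units (2 ^ m) i) / (2 ^ (2 ^ (E - 1) - 2) * 2 ^ m)"

lemma fp_bias_eq: "2 \<le> E \<Longrightarrow> fp_bias E = int (2 ^ (E - 1) - 2) + 1"
proof -
  assume "2 \<le> E"
  then have "(2::nat) ^ 1 \<le> 2 ^ (E - 1)"
    by (intro power_increasing) auto
  then show ?thesis
    by (simp add: fp_bias_def of_nat_diff)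
qed

lemma strict_mono_fp_grid: "strict_mono (fp_grid E m)"
  using strict_mono_fp_units[of "2 ^ m"] by (simp add: strict_mono_def fp_grid_def divide_strict_right_mono)

lemma fp_grid_0: "fp_grid E m 0 = 0"
  by (simp add: fp_grid_def fp_units_def)

lemma fp_grid_top:
  assumes "2 \<le> E"
  shows "fp_grid E m ((2 ^ (E - 1) - 1) * 2 ^ m) = 1"
proof -
  define B where "B = (2::nat) ^ (E - 1) - 2"
  have "(2::nat) ^ 1 \<le> 2 ^ (E - 1)"
    using assms by (intro power_increasing) auto
  then have "(2::nat) ^ (E - 1) - 1 = Suc B"
    by (simp add: B_def)
  moreover have "fp_units (2 ^ m) (Suc B * 2 ^ m + 0) = 2 ^ B * 2 ^ m"
    by (subst fp_units_normal) auto
  ultimately show ?thesis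
    unfolding fp_grid_def B_def[symmetric] by simp
qed

lemma fp_normal_eq_fp_grid:
  assumes "2 \<le> E" "1 \<le> e" "f < 2 ^ m"
  shows "2 powr real_of_int (int e - fp_bias E) * (1 + real f / 2 ^ m) = fp_grid E m (e * 2 ^ m + f)"
proof -
  define B where "B = (2::nat) ^ (E - 1) - 2"
  have "real_of_int (int e - fp_bias E) = real (e - 1) - real B"
    using assms by (simp add: fp_bias_eq B_def of_nat_diff)
  then have "2 powr real_of_int (int e - fp_bias E) = 2 ^ (e - 1) / 2 ^ B"
    by (simp add: powr_diff powr_realpow)
  moreover have "1 + real f / 2 ^ m = (2 ^ m + real f) / 2 ^ m"
    by (simp add: field_simps)
  ultimately show ?thesis
    using assms unfolding fp_grid_def B_def[symmetric] by (simp add: fp_units_normal)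
qed

lemma fp_subnormal_eq_fp_grid:
  assumes "2 \<le> E" "f < 2 ^ m"
  shows "2 powr real_of_int (1 - fp_bias E) * (real f / 2 ^ m) = fp_grid E m f"
proof -
  define B where "B = (2::nat) ^ (E - 1) - 2"
  have "real_of_int (1 - fp_bias E) = - real B"
    using assms by (simp add: fp_bias_eq B_def)
  then have "2 powr real_of_int (1 - fp_bias E) = 1 / 2 ^ B"
    by (simp add: powr_minus powr_realpow divide_inverse)
  then show ?thesis
    using assms unfolding fp_grid_def B_def[symmetric] by (simp add: fp_units_subnormal)
qed

lemma fp_set_imp_signed_fp_grid:
  assumes "2 \<le> E" "x \<in> fp_set E m"
  obtains s i where "x = (if s then -1 else 1) * fp_grid E m i" "i < (2 ^ E - 1) * 2 ^ m"
proof -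
  have "(2::nat) \<le> 2 ^ E"
    using power_increasing[of 1 E "2::nat"] assms(1) by simp
  from assms(2) consider (normal) s e f where
      "x = (if s then -1 else 1) * 2 powr real_of_int (int e - fp_bias E) * (1 + real f / 2 ^ m)"
      "1 \<le> e" "e \<le> 2 ^ E - 2" "f < 2 ^ m"
    | (subnormal) s f where
      "x = (if s then -1 else 1) * 2 powr real_of_int (1 - fp_bias E) * (real f / 2 ^ m)" "f < 2 ^ m"
    unfolding fp_set_def by blast
  then show thesis
  proof cases
    case normal
    have "e + 1 \<le> 2 ^ E - 1"
      using normal(3) \<open>2 \<le> 2 ^ E\<close> by linarith
    then have "(e + 1) * 2 ^ m \<le> (2 ^ E - 1) * (2::nat) ^ m"
      by (rule mult_right_mono) simp
    then have "e * 2 ^ m + f < (2 ^ E - 1) * 2 ^ m"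
      using normal(4) by simp
    moreover have "x = (if s then -1 else 1) * fp_grid E m (e * 2 ^ m + f)"
      unfolding normal(1) mult.assoc fp_normal_eq_fp_grid[OF assms(1) normal(2,4)] ..
    ultimately show thesis
      by (rule that[rotated])
  next
    case subnormal
    have "f < (2 ^ E - 1) * 2 ^ m"
      using subnormal(2) \<open>2 \<le> 2 ^ E\<close> by (simp add: less_le_trans)
    moreover have "x = (if s then -1 else 1) * fp_grid E m f"
      unfolding subnormal(1) mult.assoc fp_subnormal_eq_fp_grid[OF assms(1) subnormal(2)] ..
    ultimately show thesis
      by (rule that[rotated])
  qed
qed

lemma signed_fp_grid_in_fp_set:
  assumes "2 \<le> E" "i < (2 ^ E - 1) * 2 ^ m"
  shows "(if s then -1 else 1) * fp_grid E m i \<in> fp_set E m"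
proof (cases "i < 2 ^ m")
  case True
  have "(if s then -1 else 1) * fp_grid E m i
      = (if s then -1 else 1) * 2 powr real_of_int (1 - fp_bias E) * (real i / 2 ^ m)"
    unfolding mult.assoc fp_subnormal_eq_fp_grid[OF assms(1) True] ..
  with True show ?thesis
    unfolding fp_set_def by blast
next
  case False
  define e f where "e = i div 2 ^ m" and "f = i mod (2::nat) ^ m"
  have i: "i = e * 2 ^ m + f"
    unfolding e_def f_def by (rule div_mult_mod_eq[symmetric])
  have "f < 2 ^ m"
    by (simp add: f_def)
  have "1 \<le> e"
    using div_le_mono[of "2 ^ m" i "2 ^ m"] False by (simp add: e_def)
  have "e < 2 ^ E - 1"
    using assms(2) unfolding e_def by (rule less_mult_imp_div_less)
  moreover have "(if s then -1 else 1) * fp_grid E m i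
      = (if s then -1 else 1) * 2 powr real_of_int (int e - fp_bias E) * (1 + real f / 2 ^ m)"
    unfolding i mult.assoc fp_normal_eq_fp_grid[OF assms(1) \<open>1 \<le> e\<close> \<open>f < 2 ^ m\<close>] ..
  ultimately show ?thesis
    using \<open>1 \<le> e\<close> \<open>f < 2 ^ m\<close> unfolding fp_set_def by fastforce
qed

lemma fp_grid_nonneg: "0 \<le> fp_grid E m i"
  using strict_mono_less_eq[OF strict_mono_fp_grid[of E m], of 0 i] fp_grid_0 by simp

lemma fp_grid_le_1_iff:
  assumes "2 \<le> E"
  shows "fp_grid E m i \<le> 1 \<longleftrightarrow> i \<le> (2 ^ (E - 1) - 1) * 2 ^ m"
  using strict_mono_less_eq[OF strict_mono_fp_grid[of E m], of i "(2 ^ (E - 1) - 1) * 2 ^ m"]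
  by (simp only: fp_grid_top[OF assms])

lemma fp_set_Icc_0_1:
  assumes "2 \<le> E"
  shows "fp_set E m \<inter> {0..1} = fp_grid E m ` {..(2 ^ (E - 1) - 1) * 2 ^ m}"
proof (intro equalityI subsetI)
  fix x
  assume "x \<in> fp_set E m \<inter> {0..1}"
  then have "x \<in> fp_set E m" "0 \<le> x" "x \<le> 1"
    by auto
  obtain s i where x: "x = (if s then -1 else 1) * fp_grid E m i"
    using fp_set_imp_signed_fp_grid[OF assms \<open>x \<in> fp_set E m\<close>] by blast
  have "x = fp_grid E m i"
  proof (cases s)
    case True
    then have "x = - fp_grid E m i"
      using x by simp
    then show ?thesis
      using \<open>0 \<le> x\<close> fp_grid_nonneg[of E m i] by linarith
  qed (use x in simp)
  then show "x \<in> fp_grid E m ` {..(2 ^ (E - 1) - 1) * 2 ^ m}"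
    using \<open>x \<le> 1\<close> fp_grid_le_1_iff[OF assms] by auto
next
  fix x
  assume "x \<in> fp_grid E m ` {..(2 ^ (E - 1) - 1) * 2 ^ m}"
  then obtain i where i: "i \<le> (2 ^ (E - 1) - 1) * 2 ^ m" and x: "x = fp_grid E m i"
    by auto
  have "(2::nat) ^ (E - 1) - 1 < 2 ^ E - 1"
    using assms one_le_power[of "2::nat" "E - 1"] power_strict_increasing[of "E - 1" E "2::nat"]
    by linarith
  then have "i < (2 ^ E - 1) * 2 ^ m"
    using i by (meson le_less_trans mult_less_mono1 zero_less_power zero_less_numeral)
  then have "x \<in> fp_set E m"
    using signed_fp_grid_in_fp_set[OF assms, of i m False] x by simp
  moreover have "0 \<le> x" "x \<le> 1"
    using x i fp_grid_nonneg fp_grid_le_1_iff[OF assms] by simp_all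
  ultimately show "x \<in> fp_set E m \<inter> {0..1}"
    by simp
qed

lemma fp_grid_gap:
  "fp_grid E m (Suc k) - fp_grid E m k = 2 ^ (k div 2 ^ m - 1) / (2 ^ (2 ^ (E - 1) - 2) * 2 ^ m)"
  by (simp add: fp_grid_def fp_units_Suc diff_divide_distrib[symmetric])

lemma sum_lessThan_mult_div:
  fixes h :: "nat \<Rightarrow> real"
  shows "(\<Sum>k<n * M. h (k div M)) = (\<Sum>t<n. real M * h t)"
proof -
  have "(\<Sum>k\<in>{t * M..<t * M + M}. h (k div M)) = real M * h t" for t
  proof -
    have "k div M = t" if "k \<in> {t * M..<t * M + M}" for k
      using that by (intro div_nat_eqI) (auto simp: mult.commute)
    then show ?thesis
      by simp
  qed
  then show ?thesis
    by (simp flip: sum.nat_group)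
qed

lemma sum_binades:
  "(\<Sum>t<Suc B. (2::real) ^ (t - 1) * (real B + real m - real (t - 1))) = 2 ^ B * (real m + 2) - 2"
proof (induction B)
  case (Suc B)
  have pow_sum: "(\<Sum>t<Suc B. (2::real) ^ (t - 1)) = 2 ^ B"
    by (induction B) simp_all
  have "(\<Sum>t<Suc (Suc B). (2::real) ^ (t - 1) * (real (Suc B) + real m - real (t - 1)))
      = (\<Sum>t<Suc B. (2::real) ^ (t - 1) * (real B + real m - real (t - 1)) + 2 ^ (t - 1))
        + 2 ^ B * (real m + 1)"
    by (simp add: algebra_simps)
  also have "\<dots> = (2 ^ B * (real m + 2) - 2) + 2 ^ B + 2 ^ B * (real m + 1)"
    by (simp only: sum.distrib Suc.IH pow_sum)
  also have "\<dots> = 2 ^ Suc B * (real m + 2) - 2"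
    by (simp add: algebra_simps)
  finally show ?case .
qed simp

lemma fp_grid_entropy:
  assumes "2 \<le> E"
  shows "(\<Sum>k<(2 ^ (E - 1) - 1) * 2 ^ m. neg_xlogx (fp_grid E m (Suc k) - fp_grid E m k))
    = real m + 2 - 2 powr (3 - 2 ^ (E - 1))"
proof -
  define B where "B = (2::nat) ^ (E - 1) - 2"
  define g where "g t = (2::real) ^ (t - 1) / (2 ^ B * 2 ^ m)" for t
  have "(2::nat) ^ 1 \<le> 2 ^ (E - 1)"
    using assms by (intro power_increasing) auto
  then have B: "(2::nat) ^ (E - 1) - 1 = Suc B" "real (2 ^ (E - 1)) = real B + 2"
    by (simp_all add: B_def of_nat_diff)
  have neg_xlogx_g: "neg_xlogx (g t) = g t * (real B + real m - real (t - 1))" for t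
  proof -
    have "g t = 2 powr (real (t - 1) - (real B + real m))"
      by (simp add: g_def powr_diff powr_add powr_realpow)
    then show ?thesis
      by (simp add: neg_xlogx_def algebra_simps)
  qed
  have "(\<Sum>k<(2 ^ (E - 1) - 1) * 2 ^ m. neg_xlogx (fp_grid E m (Suc k) - fp_grid E m k))
      = (\<Sum>k<Suc B * 2 ^ m. neg_xlogx (g (k div 2 ^ m)))"
    unfolding B(1) by (simp add: fp_grid_gap g_def B_def)
  also have "\<dots> = (\<Sum>t<Suc B. 2 ^ m * neg_xlogx (g t))"
    by (subst sum_lessThan_mult_div) simp
  also have "\<dots> = (\<Sum>t<Suc B. (2::real) ^ (t - 1) * (real B + real m - real (t - 1))) / 2 ^ B"
    unfolding neg_xlogx_g sum_divide_distrib by (rule sum.cong) (simp_all add: g_def)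
  also have "\<dots> = real m + 2 - 2 / 2 ^ B"
    unfolding sum_binades by (simp add: field_simps)
  also have "2 / 2 ^ B = (2::real) powr (3 - 2 ^ (E - 1))"
    using B(2) by (simp add: powr_diff powr_realpow)
  finally show ?thesis .
qed

lemma card_fp_set_Icc_0_1:
  assumes "2 \<le> E"
  shows "card (fp_set E m \<inter> {0..1}) = Suc ((2 ^ (E - 1) - 1) * 2 ^ m)"
  unfolding fp_set_Icc_0_1[OF assms]
  using strict_mono_imp_inj_on[OF strict_mono_fp_grid] by (simp add: card_image inj_on_subset)

lemma cdf_family_Int_Icc_0_1: "cdf_family R (F \<inter> {0..1}) = cdf_family R F"
  unfolding cdf_family_def by auto

lemma finite_bnf_values: "finite (bnf_values n \<gamma>)"
  unfolding bnf_values_def bitstrings_def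
  using finite_lists_length_eq[of "UNIV :: bool set" n] by simp

theorem propositionD3:
  fixes n E m :: nat and \<gamma> :: "bool list \<Rightarrow> xreal" and \<phi> :: "bool list \<Rightarrow> bool list"
  assumes "binary_number_format n \<gamma> \<phi>"
    and "E \<ge> 2"
    and "card (fp_set E m \<inter> {0..1}) \<le> card (bnf_values n \<gamma>) + 1"
  shows "(\<exists>p\<in>cdf_family (bnf_values n \<gamma>) (fp_set E m).
            shannon_entropy p = real m + 2 - 2 powr (3 - 2 ^ (E - 1))) \<and>
         (\<forall>p\<in>cdf_family (bnf_values n \<gamma>) (fp_set E m).
            shannon_entropy p \<le> real m + 2 - 2 powr (3 - 2 ^ (E - 1)))"
proof -
  \<comment> \<open>Only the set of values of the format matters.\<close>
  define R where "R = bnf_values n \<gamma>"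
  define K :: nat where "K = (2 ^ (E - 1) - 1) * 2 ^ m"
  interpret cdf_grid "fp_grid E m" K
    using strict_mono_fp_grid fp_grid_0 fp_grid_top[OF assms(2)] by unfold_locales (simp_all add: K_def)
  have "finite R" "K \<le> card R"
    using finite_bnf_values assms(3) card_fp_set_Icc_0_1[OF assms(2)] by (simp_all add: R_def K_def)
  have family: "cdf_family R (fp_set E m) = cdf_family R (fp_grid E m ` {..K})"
    using cdf_family_Int_Icc_0_1[of R "fp_set E m"] fp_set_Icc_0_1[OF assms(2)] by (simp add: K_def)
  have max_entropy: "shannon_entropy grid_pmf = real m + 2 - 2 powr (3 - 2 ^ (E - 1))"
    using fp_grid_entropy[OF assms(2), of m, folded K_def] by (simp only: shannon_entropy_grid_pmf)
  obtain p where p: "set_pmf p \<subseteq> R"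
      "\<And>x. x \<in> R \<Longrightarrow> measure_pmf.prob p {y. y \<le> x} \<in> fp_grid E m ` {..K}"
      "shannon_entropy p = shannon_entropy grid_pmf"
    using grid_pmf_entropy_attained[OF \<open>finite R\<close> \<open>K \<le> card R\<close>] by blast
  then have "p \<in> cdf_family R (fp_set E m)"
    unfolding family by (simp add: cdf_family_def)
  moreover have "shannon_entropy q \<le> shannon_entropy grid_pmf" if "q \<in> cdf_family R (fp_set E m)" for q
    using that[unfolded family] unfolding cdf_family_def
    by (intro shannon_entropy_le_grid_pmf[OF \<open>finite R\<close>]) auto
  ultimately show ?thesis
    unfolding R_def[symmetric] max_entropy[symmetric] using p(3) by blast
qed

end
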